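(* Let $m_X,m_Y,\Omega_X,\Omega_Y,\alpha>0$, and for each $\bar\gamma>0$ let $f_\gamma$, $F_\gamma$ denote the pdf and cdf of the instantaneous SNR of the $\alpha$-Beaulieu–Xie shadowed channel with average SNR $\bar\gamma$. Then for every fixed $\gamma>0$, as $\bar\gamma\to\infty$, $$f_\gamma(\gamma)\sim\frac{\alpha(1-\bar\beta)^{m_Y}}{2\,\mathrm{C}_\alpha^{m_X}\Gamma(m_X)\,\bar\gamma}\left(\frac{\gamma}{\bar\gamma}\right)^{\frac{\alpha m_X}{2}-1}\exp\!\Big(-\mathrm{C}_\alpha^{-1}\big(\tfrac{\gamma}{\bar\gamma}\big)^{\alpha/2}\Big),\qquad F_\gamma(\gamma)\sim\frac{(1-\bar\beta)^{m_Y}}{\mathrm{C}_\alpha^{m_X}\Gamma(m_X+1)}\left(\frac{\gamma}{\bar\gamma}\right)^{\frac{\alpha m_X}{2}},$$ where $a\sim b$ means $a/b\to1$.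
   Context: Fix parameters $m_X,m_Y,\Omega_X,\Omega_Y>0$. The Beaulieu–Xie shadowed envelope is a random variable $\bar R>0$ with density $$f_{\bar R}(r)=\frac{2r^{2m_X-1}}{\Gamma(m_X)}\left(\frac{m_Y\Omega_X}{m_Y\Omega_X+m_X\Omega_Y}\right)^{m_Y}\left(\frac{m_X}{\Omega_X}\right)^{m_X}{}_1F_1\!\left(m_Y;m_X;\frac{m_X^2\Omega_Y r^2}{\Omega_X(m_Y\Omega_X+m_X\Omega_Y)}\right)e^{-\frac{m_X}{\Omega_X}r^2},\quad r>0.$$ Set $\bar\beta=\frac{m_X\Omega_Y}{m_Y\Omega_X+m_X\Omega_Y}$. For $\alpha>0$ put $$\mathrm{C}_\alpha=\left[\frac{\Gamma(m_X)}{\Gamma(m_X+\frac{2}{\alpha})\,{}_2F_1\!\left(m_Y,-\frac{2}{\alpha};m_X;-\frac{m_X\Omega_Y}{m_Y\Omega_X}\right)}\right]^{\alpha/2}.$$ For $\bar\gamma>0$, the instantaneous SNR of the $\alpha$-Beaulieu–Xie shadowed channel with average SNR $\bar\gamma$ is the random variable $\gamma=\bar\gamma\,\big(\mathrm{C}_\alpha m_X\bar R^2/\Omega_X\big)^{2/\alpha}$. Here ${}_1F_1(a;b;z)=\sum_{n\ge0}\frac{(a)_n}{(b)_n}\frac{z^n}{n!}$, ${}_2F_1$ is the Gauss hypergeometric function. *)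

theory Defs
  imports "HOL-Analysis.Analysis"
begin

definition hyp1F1 :: "real \<Rightarrow> real \<Rightarrow> real \<Rightarrow> real" where
  "hyp1F1 a b z = (\<Sum>n. pochhammer a n / pochhammer b n * z ^ n / fact n)"

text \<open>Gauss hypergeometric function 2F1(a,b;c;z): the power series for z \<ge> 0 (|z|<1),
  and for z < 0 its analytic continuation given by the Pfaff transformation
  2F1(a,b;c;z) = (1-z)^(-a) 2F1(a,c-b;c;z/(z-1)), where z/(z-1) lies in (0,1).
  For -1 < z < 0 both expressions coincide.\<close>
definition hyp2F1_series :: "real \<Rightarrow> real \<Rightarrow> real \<Rightarrow> real \<Rightarrow> real" where
  "hyp2F1_series a b c z = (\<Sum>n. pochhammer a n * pochhammer b n / pochhammer c n * z ^ n / fact n)"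

definition hyp2F1 :: "real \<Rightarrow> real \<Rightarrow> real \<Rightarrow> real \<Rightarrow> real" where
  "hyp2F1 a b c z =
     (if z < 0 then (1 - z) powr (-a) * hyp2F1_series a (c - b) c (z / (z - 1))
      else hyp2F1_series a b c z)"

definition bx_pdf :: "real \<Rightarrow> real \<Rightarrow> real \<Rightarrow> real \<Rightarrow> real \<Rightarrow> real" where
  "bx_pdf mX mY OX OY r =
     (if r > 0 then
        2 * r powr (2 * mX - 1) / Gamma mX
        * (mY * OX / (mY * OX + mX * OY)) powr mY
        * (mX / OX) powr mX
        * hyp1F1 mY mX (mX\<^sup>2 * OY * r\<^sup>2 / (OX * (mY * OX + mX * OY)))
        * exp (- (mX / OX) * r\<^sup>2)
      else 0)"

definition bx_beta :: "real \<Rightarrow> real \<Rightarrow> real \<Rightarrow> real \<Rightarrow> real" where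
  "bx_beta mX mY OX OY = mX * OY / (mY * OX + mX * OY)"

definition bx_C :: "real \<Rightarrow> real \<Rightarrow> real \<Rightarrow> real \<Rightarrow> real \<Rightarrow> real" where
  "bx_C mX mY OX OY \<alpha> =
     (Gamma mX / (Gamma (mX + 2 / \<alpha>) * hyp2F1 mY (- 2 / \<alpha>) mX (- mX * OY / (mY * OX))))
       powr (\<alpha> / 2)"

definition abx_snr :: "real \<Rightarrow> real \<Rightarrow> real \<Rightarrow> real \<Rightarrow> real \<Rightarrow> real \<Rightarrow> real \<Rightarrow> real" where
  "abx_snr mX mY OX OY \<alpha> gbar r =
     gbar * (bx_C mX mY OX OY \<alpha> * mX * r\<^sup>2 / OX) powr (2 / \<alpha>)"

definition abx_cdf :: "real \<Rightarrow> real \<Rightarrow> real \<Rightarrow> real \<Rightarrow> real \<Rightarrow> real \<Rightarrow> real \<Rightarrow> real" where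
  "abx_cdf mX mY OX OY \<alpha> gbar g =
     (LINT r : {r. 0 < r \<and> abx_snr mX mY OX OY \<alpha> gbar r \<le> g} | lborel. bx_pdf mX mY OX OY r)"

definition abx_pdf :: "real \<Rightarrow> real \<Rightarrow> real \<Rightarrow> real \<Rightarrow> real \<Rightarrow> real \<Rightarrow> real \<Rightarrow> real" where
  "abx_pdf mX mY OX OY \<alpha> gbar g = deriv (abx_cdf mX mY OX OY \<alpha> gbar) g"

end

theory Submission
  imports Defs "HOL-Real_Asymp.Real_Asymp"
begin

(*
  Near 0 the Beaulieu-Xie density is pdf_const * r^(2 m_X - 1) times a factor that is continuous
  with value 1 at 0, so its integral over [0, x] is asymptotic to pdf_const * x^(2 m_X) / (2 m_X)
  as x -> 0+. The SNR is at most g exactly when the envelope is at most the threshold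
  R = sqrt(Omega_X / (C m_X)) * (g / gbar)^(alpha/4), which tends to 0 as gbar -> infinity; this gives
  the CDF asymptotics. Differentiating F(R(g)) with R' = R alpha / (4 g), the Gaussian factor of the
  density reproduces the exponential of the claimed pdf asymptotics exactly, so the ratio of the pdf
  to it is 1F1(m_Y; m_X; a R^2), which tends to 1F1(m_Y; m_X; 0) = 1.
*)

lemma summable_ratio_test_tendsto:
  fixes f :: "nat \<Rightarrow> 'a::banach"
  assumes step: "\<And>n. f (Suc n) = q n *\<^sub>R f n" and "q \<longlonglongrightarrow> L" and "\<bar>L\<bar> < 1"
  shows "summable f"
proof -
  have "\<bar>L\<bar> < (1 + \<bar>L\<bar>) / 2" using \<open>\<bar>L\<bar> < 1\<close> by simp
  from order_tendstoD(2)[OF tendsto_rabs[OF \<open>q \<longlonglongrightarrow> L\<close>] this]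
  obtain N where "\<And>n. n \<ge> N \<Longrightarrow> \<bar>q n\<bar> \<le> (1 + \<bar>L\<bar>) / 2"
    by (fastforce simp: eventually_sequentially)
  then have "norm (f (Suc n)) \<le> (1 + \<bar>L\<bar>) / 2 * norm (f n)" if "n \<ge> N" for n
    unfolding step using that by (simp add: mult_right_mono del: times_divide_eq_left)
  then show ?thesis
    using \<open>\<bar>L\<bar> < 1\<close> by (intro summable_ratio_test[of "(1 + \<bar>L\<bar>) / 2" N]) auto
qed

lemma summable_hyp1F1_series:
  fixes a b z :: real
  assumes a: "a > 0" and b: "b > 0"
  shows "summable (\<lambda>n. pochhammer a n / pochhammer b n / fact n * z ^ n)"
proof (rule summable_ratio_test_tendsto
    [where q="\<lambda>n. (a + n) / ((b + n) * (real n + 1)) * z" and L=0])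
  show "pochhammer a (Suc n) / pochhammer b (Suc n) / fact (Suc n) * z ^ Suc n
      = ((a + n) / ((b + n) * (real n + 1)) * z) *\<^sub>R
        (pochhammer a n / pochhammer b n / fact n * z ^ n)" for n
    using pochhammer_pos[OF b, of n] b by (simp add: pochhammer_Suc field_simps)
  show "(\<lambda>n. (a + n) / ((b + n) * (real n + 1)) * z) \<longlonglongrightarrow> 0"
    by real_asymp
qed simp

lemma hyp1F1_eq_powser:
  "hyp1F1 a b z = (\<Sum>n. pochhammer a n / pochhammer b n / fact n * z ^ n)"
  unfolding hyp1F1_def by (simp add: field_simps)

lemma isCont_hyp1F1:
  fixes a b z :: real
  assumes "a > 0" "b > 0"
  shows "isCont (hyp1F1 a b) z"
  unfolding hyp1F1_eq_powser[abs_def]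
  by (rule isCont_powser_converges_everywhere) (rule summable_hyp1F1_series[OF assms])

lemma hyp1F1_at_0 [simp]: "hyp1F1 a b 0 = 1"
  unfolding hyp1F1_eq_powser powser_zero by simp

lemma hyp2F1_series_pos:
  fixes a b c w :: real
  assumes a: "a > 0" and b: "b > 0" and c: "c > 0" and w: "0 < w" "w < 1"
  shows "hyp2F1_series a b c w > 0"
proof -
  let ?t = "\<lambda>n. pochhammer a n * pochhammer b n / pochhammer c n * w ^ n / fact n"
  have t_pos: "?t n > 0" for n
    using pochhammer_pos[OF a] pochhammer_pos[OF b] pochhammer_pos[OF c] w by simp
  have "summable ?t"
  proof (rule summable_ratio_test_tendsto
      [where q="\<lambda>n. (a + n) * (b + n) / ((c + n) * (real n + 1)) * w" and L=w])
    show "?t (Suc n) = ((a + n) * (b + n) / ((c + n) * (real n + 1)) * w) *\<^sub>R ?t n" for n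
      using pochhammer_pos[OF c, of n] c by (simp add: pochhammer_Suc field_simps)
    show "(\<lambda>n. (a + n) * (b + n) / ((c + n) * (real n + 1)) * w) \<longlonglongrightarrow> w"
      by real_asymp
  qed (use w in simp)
  then show ?thesis
    unfolding hyp2F1_series_def using t_pos by (intro suminf_pos) auto
qed

lemma powr_le_powr_iff:
  fixes x y p :: real
  assumes "p > 0" "x \<ge> 0" "y \<ge> 0"
  shows "x powr p \<le> y powr p \<longleftrightarrow> x \<le> y"
  using assms by (meson not_le powr_less_mono2 powr_mono2 less_imp_le)

lemma absolutely_integrable_mult_powr_from_0:
  fixes \<phi> :: "real \<Rightarrow> real"
  assumes cont: "continuous_on {0..x} \<phi>" and p: "p > 0" and x: "x \<ge> 0"
  shows "(\<lambda>r. \<phi> r * r powr (p - 1)) absolutely_integrable_on {0..x}"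
proof (rule absolutely_integrable_bounded_measurable_product_real)
  show "\<phi> \<in> borel_measurable (lebesgue_on {0..x})"
    using cont by (intro continuous_imp_measurable_on_sets_lebesgue) auto
  show "bounded (\<phi> ` {0..x})"
    using cont by (intro compact_imp_bounded compact_continuous_image) auto
  show "(\<lambda>r. r powr (p - 1)) absolutely_integrable_on {0..x}"
    using p x by (intro nonnegative_absolutely_integrable_1 integrable_on_powr_from_0) auto
qed auto

lemma set_lborel_integral_eq_integral_Icc:
  fixes f :: "real \<Rightarrow> real"
  assumes "continuous_on {a<..b} f" and "f absolutely_integrable_on {a..b}"
  shows "(LINT r:{a<..b}|lborel. f r) = integral {a..b} f"
proof -
  have "(\<lambda>r. indicator {a<..b} r *\<^sub>R f r) \<in> borel_measurable borel"
    using assms(1) by (intro borel_measurable_continuous_on_indicator) auto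
  moreover have "set_integrable lebesgue {a<..b} f"
    by (rule set_integrable_subset[OF assms(2)]) auto
  ultimately have "set_integrable lborel {a<..b} f"
    unfolding set_integrable_def measurable_lborel2[symmetric] by (simp add: integrable_completion)
  then have "(LINT r:{a<..b}|lborel. f r) = integral {a<..b} f"
    by (rule set_borel_integral_eq_integral(2))
  also have "\<dots> = integral {a..b} f"
    by (rule integral_spike_set; rule negligible_subset[OF negligible_sing[of a]]) auto
  finally show ?thesis .
qed

lemma integral_from_0_has_real_derivative:
  fixes f :: "real \<Rightarrow> real"
  assumes cont: "continuous_on {0<..} f" and int: "\<And>u. u > 0 \<Longrightarrow> f integrable_on {0..u}"
    and x: "x > 0"
  shows "((\<lambda>u. integral {0..u} f) has_real_derivative f x) (at x)"
proof -
  have "((\<lambda>u. integral {x/2..u} f) has_real_derivative f x) (at x within {x/2..2*x})"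
    using x by (intro integral_has_real_derivative continuous_on_subset[OF cont]) auto
  moreover have "at x within {x/2..2*x} = at x"
    using x by (intro at_within_interior) auto
  ultimately have "((\<lambda>u. integral {0..x/2} f + integral {x/2..u} f) has_real_derivative f x) (at x)"
    using DERIV_add[OF DERIV_const] by fastforce
  then show ?thesis
  proof (rule has_field_derivative_transform_within_open[of _ _ _ "{x/2<..}"])
    fix u :: real assume "u \<in> {x/2<..}"
    then show "integral {0..x/2} f + integral {x/2..u} f = integral {0..u} f"
      using x int[of u] by (intro Henstock_Kurzweil_Integration.integral_combine) auto
  qed (use x in auto)
qed

lemma integral_mult_powr_from_0_asymp:
  fixes \<phi> :: "real \<Rightarrow> real"
  assumes cont: "continuous_on {0..} \<phi>" and "\<phi> 0 = 1" and p: "p > 0"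
  shows "((\<lambda>x. integral {0..x} (\<lambda>r. \<phi> r * r powr (p - 1)) / (x powr p / p)) \<longlongrightarrow> 1)
    (at_right 0)"
proof (rule tendstoI)
  fix e :: real assume e: "e > 0"
  have "continuous (at 0 within {0..}) \<phi>"
    using cont by (simp add: continuous_on_eq_continuous_within)
  then obtain d where "d > 0"
    and near: "\<And>r. r \<in> {0..} \<Longrightarrow> \<bar>r\<bar> < d \<Longrightarrow> \<bar>\<phi> r - 1\<bar> < e / 2"
    using e \<open>\<phi> 0 = 1\<close> unfolding continuous_within_eps_delta dist_real_def
    by (metis diff_zero half_gt_zero)
  show "\<forall>\<^sub>F x in at_right 0.
      dist (integral {0..x} (\<lambda>r. \<phi> r * r powr (p - 1)) / (x powr p / p)) 1 < e"
    unfolding eventually_at_right_field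
  proof (intro exI[of _ d] conjI allI impI)
    fix x :: real assume x: "0 < x" "x < d"
    let ?w = "\<lambda>r. r powr (p - 1)"
    have w_int: "(?w has_integral x powr p / p) {0..x}"
      using has_integral_powr_from_0[of "p - 1" x] p x by simp
    have f_int: "(\<lambda>r. \<phi> r * ?w r) integrable_on {0..x}"
      using absolutely_integrable_mult_powr_from_0[OF continuous_on_subset[OF cont] p, of x] x
      by (auto dest: absolutely_integrable_on_def[THEN iffD1])
    have "integral {0..x} (\<lambda>r. \<phi> r * ?w r) - x powr p / p
        = integral {0..x} (\<lambda>r. (\<phi> r - 1) * ?w r)"
      using integral_diff[OF f_int has_integral_integrable[OF w_int]] integral_unique[OF w_int]
      by (simp add: left_diff_distrib)
    also have "\<bar>\<dots>\<bar> \<le> integral {0..x} (\<lambda>r. e / 2 * ?w r)"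
    proof (rule integral_norm_bound_integral[where 'a=real, unfolded real_norm_def])
      show "(\<lambda>r. (\<phi> r - 1) * ?w r) integrable_on {0..x}"
        using f_int w_int by (simp add: left_diff_distrib integrable_diff has_integral_integrable)
      show "(\<lambda>r. e / 2 * ?w r) integrable_on {0..x}"
        using has_integral_mult_right[OF w_int] by (rule has_integral_integrable)
      fix r assume "r \<in> {0..x}"
      then have "\<bar>\<phi> r - 1\<bar> \<le> e / 2" using near[of r] x by fastforce
      then show "\<bar>(\<phi> r - 1) * ?w r\<bar> \<le> e / 2 * ?w r"
        by (simp add: abs_mult mult_right_mono del: times_divide_eq_left)
    qed
    also have "\<dots> = e / 2 * (x powr p / p)"
      using integral_unique[OF has_integral_mult_right[OF w_int]] by simp
    finally have "\<bar>integral {0..x} (\<lambda>r. \<phi> r * ?w r) / (x powr p / p) - 1\<bar> \<le> e / 2"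
      using x p by (simp add: abs_le_iff field_simps)
    then show "dist (integral {0..x} (\<lambda>r. \<phi> r * ?w r) / (x powr p / p)) 1 < e"
      using e by (simp add: dist_real_def)
  qed (rule \<open>d > 0\<close>)
qed

locale bx_channel =
  fixes mX mY OX OY \<alpha> :: real
  assumes mX_pos: "mX > 0" and mY_pos: "mY > 0" and OX_pos: "OX > 0" and OY_pos: "OY > 0"
    and alpha_pos: "\<alpha> > 0"
begin

abbreviation C :: real where
  "C \<equiv> bx_C mX mY OX OY \<alpha>"

definition pdf_const :: real where
  "pdf_const = 2 / Gamma mX * (1 - bx_beta mX mY OX OY) powr mY * (mX / OX) powr mX"

definition kummer_factor :: "real \<Rightarrow> real" where
  "kummer_factor r = hyp1F1 mY mX (mX\<^sup>2 * OY * r\<^sup>2 / (OX * (mY * OX + mX * OY)))"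

definition pdf_shape :: "real \<Rightarrow> real" where
  "pdf_shape r = kummer_factor r * exp (- (mX / OX) * r\<^sup>2)"

definition envelope_cdf :: "real \<Rightarrow> real" where
  "envelope_cdf x = pdf_const * integral {0..x} (\<lambda>r. pdf_shape r * r powr (2 * mX - 1))"

(* The envelope value at which the SNR equals g: solve gb * (C mX r^2 / OX) powr (2/alpha) = g. *)
definition threshold :: "real \<Rightarrow> real \<Rightarrow> real" where
  "threshold gb g = sqrt (OX / (C * mX)) * (g / gb) powr (\<alpha> / 4)"

lemma bx_denominator_pos: "mY * OX + mX * OY > 0"
  using mX_pos mY_pos OX_pos OY_pos by (simp add: add_pos_pos)

lemma one_minus_bx_beta: "1 - bx_beta mX mY OX OY = mY * OX / (mY * OX + mX * OY)"
  using bx_denominator_pos by (simp add: bx_beta_def field_simps)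

lemma one_minus_bx_beta_pos: "1 - bx_beta mX mY OX OY > 0"
  using bx_denominator_pos mY_pos OX_pos by (simp add: one_minus_bx_beta)

lemma pdf_const_pos: "pdf_const > 0"
  using one_minus_bx_beta_pos Gamma_real_pos[OF mX_pos] mX_pos OX_pos by (simp add: pdf_const_def)

lemma bx_pdf_eq:
  "r > 0 \<Longrightarrow> bx_pdf mX mY OX OY r = pdf_const * (pdf_shape r * r powr (2 * mX - 1))"
  using bx_denominator_pos OX_pos
  by (simp add: bx_pdf_def pdf_const_def pdf_shape_def kummer_factor_def one_minus_bx_beta)

lemma isCont_kummer_factor: "isCont kummer_factor r"
  unfolding kummer_factor_def using bx_denominator_pos OX_pos
  by (intro isCont_o2[OF _ isCont_hyp1F1[OF mY_pos mX_pos]] continuous_intros) auto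

lemma continuous_on_pdf_shape: "continuous_on S pdf_shape"
  unfolding pdf_shape_def using isCont_kummer_factor
  by (intro continuous_intros) (simp add: continuous_at_imp_continuous_on)

lemma pdf_shape_0: "pdf_shape 0 = 1"
  by (simp add: pdf_shape_def kummer_factor_def)

lemma integrable_pdf_shape_powr:
  "x \<ge> 0 \<Longrightarrow> (\<lambda>r. pdf_shape r * r powr (2 * mX - 1)) absolutely_integrable_on {0..x}"
  using absolutely_integrable_mult_powr_from_0[OF continuous_on_pdf_shape, where p="2 * mX"] mX_pos
  by simp

lemma set_integral_bx_pdf_eq_envelope_cdf:
  assumes "x \<ge> 0"
  shows "(LINT r:{0<..x}|lborel. bx_pdf mX mY OX OY r) = envelope_cdf x"
proof -
  have "(LINT r:{0<..x}|lborel. bx_pdf mX mY OX OY r)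
      = (LINT r:{0<..x}|lborel. pdf_const * (pdf_shape r * r powr (2 * mX - 1)))"
    by (rule set_lebesgue_integral_cong) (auto simp: bx_pdf_eq)
  also have "\<dots> = pdf_const * (LINT r:{0<..x}|lborel. pdf_shape r * r powr (2 * mX - 1))"
    by (rule set_integral_mult_right)
  also have "\<dots> = envelope_cdf x"
    unfolding envelope_cdf_def using assms integrable_pdf_shape_powr[OF assms]
    by (subst set_lborel_integral_eq_integral_Icc)
       (auto intro!: continuous_intros continuous_on_pdf_shape)
  finally show ?thesis .
qed

lemma envelope_cdf_has_real_derivative:
  assumes "x > 0"
  shows "(envelope_cdf has_real_derivative pdf_const * (pdf_shape x * x powr (2 * mX - 1))) (at x)"
proof -
  have "(\<lambda>r. pdf_shape r * r powr (2 * mX - 1)) integrable_on {0..u}" if "u > 0" for u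
    using integrable_pdf_shape_powr[of u] that by (simp add: absolutely_integrable_on_def)
  then show ?thesis
    unfolding envelope_cdf_def[abs_def] using assms
    by (intro DERIV_cmult integral_from_0_has_real_derivative)
       (auto intro!: continuous_intros continuous_on_pdf_shape)
qed

lemma envelope_cdf_asymp:
  "((\<lambda>x. envelope_cdf x / (pdf_const * x powr (2 * mX) / (2 * mX))) \<longlongrightarrow> 1) (at_right 0)"
proof -
  have "((\<lambda>x. integral {0..x} (\<lambda>r. pdf_shape r * r powr (2 * mX - 1)) / (x powr (2 * mX) / (2 * mX)))
      \<longlongrightarrow> 1) (at_right 0)"
    using integral_mult_powr_from_0_asymp[OF continuous_on_pdf_shape pdf_shape_0, of "2 * mX"] mX_pos
    by simp
  then show ?thesis
    using pdf_const_pos by (simp add: envelope_cdf_def)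
qed

lemma C_pos: "C > 0"
proof -
  \<comment> \<open>The argument of 2F1 is negative, so it is evaluated by the Pfaff-transformed series,
    whose parameters are all positive.\<close>
  define z where "z = - mX * OY / (mY * OX)"
  have z: "z < 0"
    using mX_pos mY_pos OX_pos OY_pos by (simp add: z_def divide_neg_pos)
  have w: "0 < z / (z - 1)" "z / (z - 1) < 1"
    using z by (auto simp: zero_less_divide_iff divide_less_eq)
  have shifted: "mX + 2 / \<alpha> > 0"
    using mX_pos alpha_pos by (simp add: add_pos_pos)
  then have "hyp2F1_series mY (mX - - 2 / \<alpha>) mX (z / (z - 1)) > 0"
    using hyp2F1_series_pos[OF mY_pos _ mX_pos w] by simp
  then have "hyp2F1 mY (- 2 / \<alpha>) mX z > 0"
    unfolding hyp2F1_def using z by simp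
  then show ?thesis
    unfolding bx_C_def z_def[symmetric]
    using Gamma_real_pos[OF mX_pos] Gamma_real_pos[OF shifted] by simp
qed

lemma threshold_pos: "gb > 0 \<Longrightarrow> g > 0 \<Longrightarrow> threshold gb g > 0"
  using C_pos mX_pos OX_pos by (simp add: threshold_def)

lemma threshold_powr:
  "threshold gb g powr q = (OX / (C * mX)) powr (q / 2) * (g / gb) powr (\<alpha> * q / 4)"
  using C_pos mX_pos OX_pos
  by (simp add: threshold_def powr_half_sqrt[symmetric] powr_mult powr_powr)

lemma threshold_sq: "(threshold gb g)\<^sup>2 = OX / (C * mX) * (g / gb) powr (\<alpha> / 2)"
proof -
  have "((g / gb) powr (\<alpha> / 4))\<^sup>2 = (g / gb) powr (\<alpha> / 2)"
    by (simp add: power2_eq_square powr_add[symmetric])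
  then show ?thesis
    using C_pos mX_pos OX_pos by (simp add: threshold_def power_mult_distrib)
qed

lemma abx_snr_le_iff:
  assumes gb: "gb > 0" and g: "g > 0" and r: "r > 0"
  shows "abx_snr mX mY OX OY \<alpha> gb r \<le> g \<longleftrightarrow> r \<le> threshold gb g"
proof -
  define u where "u = C * mX * r\<^sup>2 / OX"
  have u: "u > 0"
    using C_pos mX_pos OX_pos r by (simp add: u_def)
  have "abx_snr mX mY OX OY \<alpha> gb r \<le> g
      \<longleftrightarrow> u powr (2 / \<alpha>) \<le> ((g / gb) powr (\<alpha> / 2)) powr (2 / \<alpha>)"
    using gb g alpha_pos by (simp add: abx_snr_def u_def powr_powr le_divide_eq mult.commute)
  also have "\<dots> \<longleftrightarrow> u \<le> (g / gb) powr (\<alpha> / 2)"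
    using u alpha_pos by (simp add: powr_le_powr_iff)
  also have "\<dots> \<longleftrightarrow> r\<^sup>2 \<le> (threshold gb g)\<^sup>2"
    using C_pos mX_pos OX_pos by (simp add: u_def threshold_sq field_simps)
  also have "\<dots> \<longleftrightarrow> r \<le> threshold gb g"
    using r threshold_pos[OF gb g] by (simp add: power_mono_iff)
  finally show ?thesis .
qed

lemma abx_cdf_eq_envelope_cdf:
  assumes gb: "gb > 0" and g: "g > 0"
  shows "abx_cdf mX mY OX OY \<alpha> gb g = envelope_cdf (threshold gb g)"
proof -
  have "{r. 0 < r \<and> abx_snr mX mY OX OY \<alpha> gb r \<le> g} = {0<..threshold gb g}"
    using abx_snr_le_iff[OF gb g] by auto
  then show ?thesis
    using set_integral_bx_pdf_eq_envelope_cdf threshold_pos[OF gb g] by (simp add: abx_cdf_def)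
qed

lemma threshold_has_real_derivative:
  assumes gb: "gb > 0" and g: "g > 0"
  shows "(threshold gb has_real_derivative threshold gb g * \<alpha> / (4 * g)) (at g)"
proof -
  have "((\<lambda>u. u powr (\<alpha> / 4)) has_real_derivative \<alpha> / 4 * (g / gb) powr (\<alpha> / 4 - 1)) (at (g / gb))"
    using gb g by (intro has_real_derivative_powr) auto
  from DERIV_cmult[OF DERIV_chain2[OF this DERIV_cdivide[OF DERIV_ident]], of "sqrt (OX / (C * mX))"]
  have "(threshold gb has_real_derivative
      sqrt (OX / (C * mX)) * (\<alpha> / 4 * (g / gb) powr (\<alpha> / 4 - 1) * (1 / gb))) (at g)"
    by (simp add: threshold_def[abs_def])
  moreover have "(g / gb) powr (\<alpha> / 4 - 1) = (g / gb) powr (\<alpha> / 4) * gb / g"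
    using gb g by (simp add: powr_diff)
  ultimately show ?thesis
    using gb g by (simp add: threshold_def mult_ac)
qed

lemma threshold_tendsto_0:
  assumes g: "g > 0"
  shows "filterlim (\<lambda>gb. threshold gb g) (at_right 0) at_top"
  unfolding filterlim_at
proof
  show "\<forall>\<^sub>F gb in at_top. threshold gb g \<in> {0<..} \<and> threshold gb g \<noteq> 0"
    using eventually_gt_at_top[of 0] by eventually_elim (use threshold_pos[OF _ g] in fastforce)
  have "((\<lambda>gb. g / gb) \<longlongrightarrow> 0) at_top"
    by real_asymp
  then have "((\<lambda>gb. (g / gb) powr (\<alpha> / 4)) \<longlongrightarrow> 0) at_top"
  proof (rule tendsto_zero_powrI[OF _ tendsto_const])
    show "\<forall>\<^sub>F gb in at_top. 0 \<le> g / gb"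
      using eventually_gt_at_top[of 0] by eventually_elim (use g in simp)
  qed (use alpha_pos in simp)
  then show "((\<lambda>gb. threshold gb g) \<longlongrightarrow> 0) at_top"
    unfolding threshold_def by (rule tendsto_mult_right_zero)
qed

lemma pdf_const_mul_threshold_powr:
  "pdf_const * threshold gb g powr (2 * mX)
    = 2 * (1 - bx_beta mX mY OX OY) powr mY / (C powr mX * Gamma mX) * (g / gb) powr (\<alpha> * mX / 2)"
proof -
  have "(mX / OX) * (OX / (C * mX)) = 1 / C"
    using C_pos mX_pos OX_pos by (simp add: field_simps)
  then have cancel: "(mX / OX) powr mX * (OX / (C * mX)) powr mX = 1 / C powr mX"
    by (metis powr_mult powr_divide powr_one_eq_one)
  have "pdf_const * threshold gb g powr (2 * mX) = 2 / Gamma mX * (1 - bx_beta mX mY OX OY) powr mY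
      * ((mX / OX) powr mX * (OX / (C * mX)) powr mX) * (g / gb) powr (\<alpha> * mX / 2)"
    by (simp add: pdf_const_def threshold_powr mult_ac)
  then show ?thesis
    unfolding cancel by simp
qed

lemma abx_pdf_eq:
  assumes gb: "gb > 0" and g: "g > 0"
  shows "abx_pdf mX mY OX OY \<alpha> gb g = kummer_factor (threshold gb g) *
    (\<alpha> * (1 - bx_beta mX mY OX OY) powr mY / (2 * C powr mX * Gamma mX * gb)
      * (g / gb) powr (\<alpha> * mX / 2 - 1) * exp (- ((g / gb) powr (\<alpha> / 2)) / C))"
proof -
  define R where "R = threshold gb g"
  have R: "R > 0"
    using threshold_pos[OF gb g] by (simp add: R_def)
  have "((\<lambda>y. envelope_cdf (threshold gb y)) has_real_derivative
      pdf_const * (pdf_shape R * R powr (2 * mX - 1)) * (R * \<alpha> / (4 * g))) (at g)"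
    unfolding R_def using threshold_pos[OF gb g]
    by (intro DERIV_chain2[OF envelope_cdf_has_real_derivative threshold_has_real_derivative[OF gb g]])
  then have "(abx_cdf mX mY OX OY \<alpha> gb has_real_derivative
      pdf_const * (pdf_shape R * R powr (2 * mX - 1)) * (R * \<alpha> / (4 * g))) (at g)"
    by (rule has_field_derivative_transform_within_open[of _ _ _ "{0<..}"])
       (use g abx_cdf_eq_envelope_cdf[OF gb] in auto)
  then have "abx_pdf mX mY OX OY \<alpha> gb g
      = pdf_const * (pdf_shape R * R powr (2 * mX - 1)) * (R * \<alpha> / (4 * g))"
    unfolding abx_pdf_def by (rule DERIV_imp_deriv)
  also have "\<dots> = kummer_factor R * exp (- (mX / OX) * R\<^sup>2)
      * (pdf_const * (R powr (2 * mX - 1) * R)) * \<alpha> / (4 * g)"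
    by (simp add: pdf_shape_def mult_ac)
  also have "R powr (2 * mX - 1) * R = R powr (2 * mX)"
    using R by (simp add: powr_diff)
  also have "- (mX / OX) * R\<^sup>2 = - ((g / gb) powr (\<alpha> / 2)) / C"
    using C_pos mX_pos OX_pos by (simp add: R_def threshold_sq)
  also have "pdf_const * R powr (2 * mX)
      = 2 * (1 - bx_beta mX mY OX OY) powr mY / (C powr mX * Gamma mX) * (g / gb) powr (\<alpha> * mX / 2)"
    unfolding R_def by (rule pdf_const_mul_threshold_powr)
  also have "(g / gb) powr (\<alpha> * mX / 2) = (g / gb) powr (\<alpha> * mX / 2 - 1) * g / gb"
    using gb g by (simp add: powr_diff)
  finally show ?thesis
    using gb g by (simp add: R_def field_simps)
qed

lemma abx_cdf_main_term_eq:
  assumes "gb > 0" "g > 0"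
  shows "(1 - bx_beta mX mY OX OY) powr mY / (C powr mX * Gamma (mX + 1)) * (g / gb) powr (\<alpha> * mX / 2)
    = pdf_const * threshold gb g powr (2 * mX) / (2 * mX)"
proof -
  have "Gamma (mX + 1) = mX * Gamma mX"
    using mX_pos by (intro Gamma_plus1) (auto dest: nonpos_Ints_nonpos)
  then show ?thesis
    unfolding pdf_const_mul_threshold_powr using mX_pos Gamma_real_pos[OF mX_pos]
    by (simp add: field_simps)
qed

lemma abx_cdf_asymp:
  assumes g: "g > 0"
  shows "((\<lambda>gbar. abx_cdf mX mY OX OY \<alpha> gbar g /
            ((1 - bx_beta mX mY OX OY) powr mY / (C powr mX * Gamma (mX + 1))
              * (g / gbar) powr (\<alpha> * mX / 2))) \<longlongrightarrow> 1) at_top"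
proof (rule Lim_transform_eventually)
  show "((\<lambda>gb. envelope_cdf (threshold gb g) / (pdf_const * threshold gb g powr (2 * mX) / (2 * mX)))
      \<longlongrightarrow> 1) at_top"
    by (rule filterlim_compose[OF envelope_cdf_asymp threshold_tendsto_0[OF g]])
  show "\<forall>\<^sub>F gb in at_top.
      envelope_cdf (threshold gb g) / (pdf_const * threshold gb g powr (2 * mX) / (2 * mX))
      = abx_cdf mX mY OX OY \<alpha> gb g /
        ((1 - bx_beta mX mY OX OY) powr mY / (C powr mX * Gamma (mX + 1)) * (g / gb) powr (\<alpha> * mX / 2))"
    using eventually_gt_at_top[of 0]
    by eventually_elim (simp only: abx_cdf_eq_envelope_cdf[OF _ g] abx_cdf_main_term_eq[OF _ g])
qed

lemma abx_pdf_asymp: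
  assumes g: "g > 0"
  shows "((\<lambda>gbar. abx_pdf mX mY OX OY \<alpha> gbar g /
            (\<alpha> * (1 - bx_beta mX mY OX OY) powr mY / (2 * C powr mX * Gamma mX * gbar)
              * (g / gbar) powr (\<alpha> * mX / 2 - 1)
              * exp (- ((g / gbar) powr (\<alpha> / 2)) / C))) \<longlongrightarrow> 1) at_top"
proof (rule Lim_transform_eventually)
  have "((\<lambda>gb. threshold gb g) \<longlongrightarrow> 0) at_top"
    using threshold_tendsto_0[OF g] unfolding filterlim_at by blast
  then show "((\<lambda>gb. kummer_factor (threshold gb g)) \<longlongrightarrow> 1) at_top"
    using isCont_tendsto_compose[OF isCont_kummer_factor] by (fastforce simp: kummer_factor_def)
  show "\<forall>\<^sub>F gb in at_top. kummer_factor (threshold gb g)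
      = abx_pdf mX mY OX OY \<alpha> gb g /
        (\<alpha> * (1 - bx_beta mX mY OX OY) powr mY / (2 * C powr mX * Gamma mX * gb)
          * (g / gb) powr (\<alpha> * mX / 2 - 1) * exp (- ((g / gb) powr (\<alpha> / 2)) / C))"
    using eventually_gt_at_top[of 0]
  proof eventually_elim
    case (elim gb)
    then show ?case
      using g alpha_pos C_pos one_minus_bx_beta_pos Gamma_real_pos[OF mX_pos]
      by (simp add: abx_pdf_eq)
  qed
qed

end

theorem corollary1:
  fixes mX mY OX OY \<alpha> g :: real
  assumes "mX > 0" and "mY > 0" and "OX > 0" and "OY > 0" and "\<alpha> > 0" and "g > 0"
  shows "((\<lambda>gbar. abx_pdf mX mY OX OY \<alpha> gbar g /
            (\<alpha> * (1 - bx_beta mX mY OX OY) powr mY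
              / (2 * bx_C mX mY OX OY \<alpha> powr mX * Gamma mX * gbar)
              * (g / gbar) powr (\<alpha> * mX / 2 - 1)
              * exp (- ((g / gbar) powr (\<alpha> / 2)) / bx_C mX mY OX OY \<alpha>)))
          \<longlongrightarrow> 1) at_top
       \<and> ((\<lambda>gbar. abx_cdf mX mY OX OY \<alpha> gbar g /
            ((1 - bx_beta mX mY OX OY) powr mY
              / (bx_C mX mY OX OY \<alpha> powr mX * Gamma (mX + 1))
              * (g / gbar) powr (\<alpha> * mX / 2)))
          \<longlongrightarrow> 1) at_top"
proof -
  interpret bx_channel mX mY OX OY \<alpha>
    using assms by unfold_locales
  show ?thesis
    using abx_pdf_asymp[OF \<open>g > 0\<close>] abx_cdf_asymp[OF \<open>g > 0\<close>] by blast
qed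

end
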